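(* Let $U:\mathbb{R}^d\to\mathbb{R}$ be twice differentiable with $\mu\mathrm{I}_d\preceq\nabla^2U(z)\preceq L\mathrm{I}_d$ for all $z$, where $\mu\in(0,+\infty)$, $L\in[0,+\infty)$. Then for any $\lambda\in\Lambda$ and $\lambda_*=\arg\min_{\lambda'\in\Lambda}\mathcal{F}(q_{\lambda'})$, $$\langle\nabla\mathcal{E}(\lambda)-\nabla\mathcal{E}(\lambda_* ),\lambda-\lambda_*\rangle\ge\frac\mu2\|\lambda-\lambda_*\|_2^2+\mathrm{D}_{\lambda'\mapsto\mathcal{E}(q_{\lambda'})}(\lambda,\lambda_* ),$$ where $\nabla\mathcal{E}(\lambda)$ denotes the gradient of $\lambda\mapsto\mathcal{E}(q_\lambda)$.
   Context: $\mathcal{E}(q)=\int U\,\mathrm{d}q$, $\mathcal{H}(q)=\int\log q\,\mathrm{d}q$, $\mathcal{F}=\mathcal{E}+\mathcal{H}$. Parameters $\lambda=(m,C)$ with $m\in\mathbb{R}^d$ and $C$ lower-triangular $d\times d$ with strictly positive diagonal ($\Lambda$ is the set of these), inner product $\langle(m,C),(m',C')\rangle=m^\top m'+\mathrm{tr}(C^\top C')$ with norm $\|\cdot\|_2$, and $q_\lambda=\mathrm{Normal}(m,CC^\top)$. For differentiable $f$, $\mathrm{D}_f(\lambda,\lambda')=f(\lambda)-f(\lambda')-\langle\nabla f(\lambda'),\lambda-\lambda'\rangle$. *)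

theory Defs
  imports "HOL-Probability.Probability"
begin

text \<open>Dimension d is the cardinality of the finite, well-ordered index type 'n.
  A parameter lambda = (m, C) lives in real^'n \<times> real^'n^'n; the product inner
  product is m \<bullet> m' + C \<bullet> C' = m^T m' + tr(C^T C').\<close>

definition lower_tri_pos :: "real^('n::{finite,wellorder})^('n::{finite,wellorder}) \<Rightarrow> bool" where
  "lower_tri_pos C \<longleftrightarrow> (\<forall>i j. i < j \<longrightarrow> C $ i $ j = 0) \<and> (\<forall>i. C $ i $ i > 0)"

definition Lambda_set :: "((real^('n::{finite,wellorder})) \<times> (real^('n::{finite,wellorder})^('n::{finite,wellorder}))) set" where
  "Lambda_set = {(m, C). lower_tri_pos C}"

definition std_gauss :: "(real^'n::finite) measure" where
  "std_gauss = density lborel (\<lambda>x. ennreal (\<Prod>i\<in>UNIV. std_normal_density (x $ i)))"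

text \<open>q_lambda = Normal(m, C C^T), the law of m + C Z with Z standard Gaussian.\<close>
definition q_param :: "(real^'n::finite) \<times> (real^'n^'n) \<Rightarrow> (real^'n) measure" where
  "q_param lam = distr std_gauss borel (\<lambda>u. fst lam + snd lam *v u)"

definition energy :: "((real^'n::finite) \<Rightarrow> real) \<Rightarrow> (real^'n) measure \<Rightarrow> real" where
  "energy U q = integral\<^sup>L q U"

definition entropy_neg :: "(real^'n::finite) measure \<Rightarrow> real" where
  "entropy_neg q = integral\<^sup>L q (\<lambda>x. ln (enn2real (RN_deriv lborel q x)))"

definition free_energy :: "((real^'n::finite) \<Rightarrow> real) \<Rightarrow> (real^'n) measure \<Rightarrow> real" where
  "free_energy U q = energy U q + entropy_neg q"

definition grad :: "('a::real_inner \<Rightarrow> real) \<Rightarrow> 'a \<Rightarrow> 'a" where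
  "grad f x = (SOME g. (f has_derivative (\<lambda>h. g \<bullet> h)) (at x))"

definition bregman :: "('a::real_inner \<Rightarrow> real) \<Rightarrow> 'a \<Rightarrow> 'a \<Rightarrow> real" where
  "bregman f x y = f x - f y - grad f y \<bullet> (x - y)"

end

theory Submission
  imports Defs
begin

text \<open>Write q(\<lambda>) as the law of m + C z with z standard Gaussian, so that
  E(\<lambda>) = \<E>[U(m + C z)]. Taylor's theorem with the Hessian bounds sandwiches the
  Bregman remainder U(x + v) - U(x) - \<langle>\<nabla>U(x), v\<rangle> between \<mu>/2 |v|^2 and L/2 |v|^2.
  Taking x = m + C z, v = h_m + h_C z and integrating, the Gaussian identity
  \<E>|a + B z|^2 = |a|^2 + |B|^2 turns these into the same bounds, in terms of |h|^2, for
  E(\<lambda> + h) - E(\<lambda>) - \<E>\<langle>\<nabla>U(m + C z), h_m + h_C z\<rangle>.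
  Hence E is differentiable with that derivative and D_E(\<lambda>*, \<lambda>) \<ge> \<mu>/2 |\<lambda> - \<lambda>*|^2,
  and the claim follows from the identity
  \<langle>\<nabla>E(\<lambda>) - \<nabla>E(\<lambda>*), \<lambda> - \<lambda>*\<rangle> = D_E(\<lambda>, \<lambda>*) + D_E(\<lambda>*, \<lambda>).\<close>

section \<open>Gaussian moments\<close>

lemma Basis_vec_eq_range_axis: "(Basis :: (real^'n) set) = range (\<lambda>i. axis i 1)"
  unfolding Basis_vec_def by auto

lemma inj_axis_one: "inj (\<lambda>i::'n::finite. axis i (1::real))"
  by (auto simp: inj_def axis_eq_axis)

lemma sum_Basis_vec_nth: "(\<Sum>b\<in>(Basis::(real^'n::finite) set). f b *\<^sub>R b) $ i = f (axis i 1)"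
proof -
  have "(\<Sum>b\<in>(Basis::(real^'n) set). f b *\<^sub>R b) = (\<Sum>j\<in>UNIV. f (axis j 1) *\<^sub>R axis j (1::real))"
    unfolding Basis_vec_eq_range_axis by (simp add: sum.reindex[OF inj_axis_one])
  then show ?thesis
    by (simp add: axis_def if_distrib cong: if_cong)
qed

lemma prod_Basis_vec: "(\<Prod>b\<in>(Basis::(real^'n::finite) set). g b) = (\<Prod>i\<in>UNIV. g (axis i 1))"
  unfolding Basis_vec_eq_range_axis by (simp add: prod.reindex[OF inj_axis_one])

definition std_normal_moment :: "nat \<Rightarrow> real" where
  "std_normal_moment k = (\<integral>t. std_normal_density t * t ^ k \<partial>lborel)"

lemma has_bochner_integral_std_gauss_monomial:
  fixes k :: "'n::finite \<Rightarrow> nat"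
  shows "has_bochner_integral std_gauss (\<lambda>z::real^'n. \<Prod>i\<in>UNIV. (z$i)^(k i))
           (\<Prod>i\<in>UNIV. std_normal_moment (k i))"
proof -
  define g where "g = (\<lambda>z::real^'n. \<Prod>i\<in>UNIV. std_normal_density (z $ i))"
  define h where "h = (\<lambda>z::real^'n. \<Prod>i\<in>UNIV. (z$i)^(k i))"
  define T where "T = (\<lambda>f. \<Sum>b\<in>(Basis::(real^'n) set). f b *\<^sub>R b)"
  define F where "F = (\<lambda>b t. std_normal_density t * t ^ k (inv (\<lambda>i. axis i (1::real)) b))"
  interpret product_sigma_finite "\<lambda>_. lborel" by standard
  have g_nonneg: "AE x in lborel. 0 \<le> g x"
    unfolding g_def by (auto intro!: prod_nonneg)
  have lborel_T: "lborel = distr (\<Pi>\<^sub>M b\<in>Basis. lborel) borel T"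
    unfolding T_def by (rule lborel_eq)
  have T_measurable[measurable]: "T \<in> measurable (\<Pi>\<^sub>M b\<in>Basis. lborel) borel"
    unfolding T_def by measurable
  have factor: "g (T f) *\<^sub>R h (T f) = (\<Prod>b\<in>Basis. F b (f b))" for f
    unfolding g_def h_def T_def F_def prod_Basis_vec sum_Basis_vec_nth
    by (simp add: inv_f_f[OF inj_axis_one] prod.distrib)
  have F_integrable: "integrable lborel (F b)" for b
    unfolding F_def by (rule integrable_std_normal_moment)
  have "integrable (\<Pi>\<^sub>M b\<in>Basis. lborel) (\<lambda>f. \<Prod>b\<in>Basis. F b (f b))"
    by (rule product_integrable_prod) (auto intro: F_integrable)
  then have "integrable lborel (\<lambda>x. g x *\<^sub>R h x)"
    unfolding lborel_T factor[symmetric] g_def h_def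
    by (subst integrable_distr_eq) auto
  then have integrable: "integrable (density lborel g) h"
    using g_nonneg unfolding g_def h_def by (subst integrable_density) auto
  have "integral\<^sup>L (density lborel g) h = (\<integral>x. g x *\<^sub>R h x \<partial>lborel)"
    using g_nonneg unfolding g_def h_def by (subst integral_density) auto
  also have "\<dots> = (\<integral>f. (\<Prod>b\<in>Basis. F b (f b)) \<partial>(\<Pi>\<^sub>M b\<in>Basis. lborel))"
    unfolding lborel_T factor[symmetric] g_def h_def by (subst integral_distr) auto
  also have "\<dots> = (\<Prod>b\<in>Basis. integral\<^sup>L lborel (F b))"
    by (rule product_integral_prod) (auto intro: F_integrable)
  also have "\<dots> = (\<Prod>i\<in>UNIV. std_normal_moment (k i))"
    unfolding prod_Basis_vec F_def std_normal_moment_def by (simp add: inv_f_f[OF inj_axis_one])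
  finally show ?thesis
    using integrable unfolding has_bochner_integral_iff std_gauss_def g_def h_def by simp
qed

lemma std_normal_moment_0: "std_normal_moment 0 = 1"
  using integral_std_normal_moment_even[of 0] by (simp add: std_normal_moment_def)

lemma std_normal_moment_1: "std_normal_moment (Suc 0) = 0"
  using integral_std_normal_moment_odd[of 0] by (simp add: std_normal_moment_def)

lemma std_normal_moment_2: "std_normal_moment 2 = 1"
  using integral_std_normal_moment_even[of 1] by (simp add: std_normal_moment_def)

lemma sets_std_gauss [measurable_cong]: "sets (std_gauss :: (real^'n::finite) measure) = sets borel"
  unfolding std_gauss_def by simp

lemma prob_space_std_gauss: "prob_space (std_gauss :: (real^'n::finite) measure)"
proof
  have "has_bochner_integral (std_gauss :: (real^'n) measure) (\<lambda>_. 1) (1::real)"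
    using has_bochner_integral_std_gauss_monomial[of "\<lambda>_. 0"] by (simp add: std_normal_moment_0)
  then have "(\<integral>\<^sup>+_. ennreal 1 \<partial>(std_gauss :: (real^'n) measure)) = ennreal 1"
    by (subst nn_integral_eq_integral) (auto simp: has_bochner_integral_iff)
  then show "emeasure (std_gauss :: (real^'n) measure) (space std_gauss) = 1"
    by simp
qed

lemma has_bochner_integral_std_gauss_const:
  "has_bochner_integral (std_gauss :: (real^'n::finite) measure) (\<lambda>_. c) (c::real)"
proof -
  interpret prob_space "std_gauss :: (real^'n) measure"
    by (rule prob_space_std_gauss)
  show ?thesis
    by (simp add: has_bochner_integral_iff prob_space)
qed

lemma has_bochner_integral_std_gauss_nth:
  "has_bochner_integral (std_gauss :: (real^'n::finite) measure) (\<lambda>z. z $ i) 0"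
proof -
  define k where "k = (\<lambda>l. if l = i then 1 else (0::nat))"
  have monomial: "(\<Prod>l\<in>UNIV. (z$l)^(k l)) = z$i" for z :: "real^'n"
    unfolding k_def by (simp add: if_distrib prod.If_cases)
  have moment: "(\<Prod>l\<in>UNIV. std_normal_moment (k l)) = 0"
    by (rule prod_zero) (auto simp: k_def std_normal_moment_1)
  show ?thesis
    using has_bochner_integral_std_gauss_monomial[of k] unfolding monomial moment .
qed

lemma has_bochner_integral_std_gauss_nth_mult:
  "has_bochner_integral (std_gauss :: (real^'n::finite) measure) (\<lambda>z. z $ i * z $ j)
     (if i = j then 1 else 0)"
proof -
  define k where "k = (\<lambda>l. (if l = i then 1 else 0) + (if l = j then 1 else (0::nat)))"
  have monomial: "(\<Prod>l\<in>UNIV. (z$l)^(k l)) = z$i * z$j" for z :: "real^'n"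
  proof -
    have "(z$l)^(k l) = (if l = i then z$l else 1) * (if l = j then z$l else 1)" for l
      by (simp add: k_def power_add)
    then show ?thesis
      by (simp add: prod.distrib prod.delta)
  qed
  have moment: "(\<Prod>l\<in>UNIV. std_normal_moment (k l)) = (if i = j then 1 else 0)"
  proof (cases "i = j")
    case True
    then show ?thesis
      using std_normal_moment_2
      by (simp add: k_def if_distrib prod.If_cases std_normal_moment_0 numeral_2_eq_2)
  next
    case False
    then have "std_normal_moment (k i) = 0"
      by (simp add: k_def std_normal_moment_1)
    with False show ?thesis
      by (auto simp: prod_zero_iff)
  qed
  show ?thesis
    using has_bochner_integral_std_gauss_monomial[of k] unfolding monomial moment .
qed

lemma has_bochner_integral_std_gauss_inner:
  "has_bochner_integral (std_gauss :: (real^'n::finite) measure) (\<lambda>z. w \<bullet> z) 0"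
proof -
  have "has_bochner_integral std_gauss (\<lambda>z::real^'n. \<Sum>i\<in>UNIV. w $ i * z $ i) (\<Sum>i\<in>UNIV. w $ i * 0)"
    by (intro has_bochner_integral_sum has_bochner_integral_mult_right
        has_bochner_integral_std_gauss_nth)
  then show ?thesis
    by (simp add: inner_vec_def)
qed

lemma has_bochner_integral_std_gauss_inner_sq:
  "has_bochner_integral (std_gauss :: (real^'n::finite) measure) (\<lambda>z. (w \<bullet> z)^2) (norm w ^ 2)"
proof -
  have "has_bochner_integral std_gauss
      (\<lambda>z::real^'n. \<Sum>i\<in>UNIV. \<Sum>j\<in>UNIV. (w $ i * w $ j) * (z $ i * z $ j))
      (\<Sum>i\<in>UNIV. \<Sum>j\<in>UNIV. (w $ i * w $ j) * (if i = j then 1 else 0))"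
    by (intro has_bochner_integral_sum has_bochner_integral_mult_right
        has_bochner_integral_std_gauss_nth_mult)
  moreover have "(w \<bullet> z)^2 = (\<Sum>i\<in>UNIV. \<Sum>j\<in>UNIV. (w $ i * w $ j) * (z $ i * z $ j))" for z
    by (simp add: inner_vec_def power2_eq_square sum_product algebra_simps)
  moreover have "(\<Sum>i\<in>UNIV. \<Sum>j\<in>UNIV. (w $ i * w $ j) * (if i = j then 1 else 0)) = norm w ^ 2"
    by (simp add: power2_norm_eq_inner inner_vec_def if_distrib cong: if_cong)
  ultimately show ?thesis
    by simp
qed

lemma has_bochner_integral_std_gauss_norm_affine_sq:
  fixes a :: "real^'m::finite" and B :: "real^'n::finite^'m"
  shows "has_bochner_integral std_gauss (\<lambda>z. norm (a + B *v z)^2) (norm a^2 + norm B^2)"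
proof -
  have "has_bochner_integral std_gauss
      (\<lambda>z. norm a^2 + 2 * ((a v* B) \<bullet> z) + (\<Sum>i\<in>UNIV. (B $ i \<bullet> z)^2))
      (norm a^2 + 2 * 0 + (\<Sum>i\<in>UNIV. norm (B $ i)^2))"
    by (intro has_bochner_integral_add has_bochner_integral_sum has_bochner_integral_mult_right
        has_bochner_integral_std_gauss_const has_bochner_integral_std_gauss_inner
        has_bochner_integral_std_gauss_inner_sq)
  moreover have "norm (a + B *v z)^2 = norm a^2 + 2 * ((a v* B) \<bullet> z) + (\<Sum>i\<in>UNIV. (B $ i \<bullet> z)^2)"
    for z
  proof -
    have "norm (B *v z)^2 = (\<Sum>i\<in>UNIV. (B *v z) $ i * (B *v z) $ i)"
      unfolding power2_norm_eq_inner inner_vec_def by simp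
    also have "\<dots> = (\<Sum>i\<in>UNIV. (B $ i \<bullet> z)^2)"
      by (simp only: matrix_vector_mul_component power2_eq_square)
    finally have "norm (B *v z)^2 = (\<Sum>i\<in>UNIV. (B $ i \<bullet> z)^2)" .
    moreover have "norm (a + B *v z)^2 = norm a^2 + 2 * (a \<bullet> (B *v z)) + norm (B *v z)^2"
      by (simp add: power2_norm_eq_inner inner_add_left inner_add_right
          inner_commute[of "B *v z" a])
    ultimately show ?thesis
      by (simp add: dot_lmul_matrix)
  qed
  moreover have "(\<Sum>i\<in>UNIV. norm (B $ i)^2) = norm B^2"
    by (simp add: power2_norm_eq_inner inner_vec_def)
  ultimately show ?thesis
    by simp
qed

section \<open>Second-order bounds and Bregman divergences\<close>

lemma second_order_remainder_bounds:
  fixes f f' f'' :: "real \<Rightarrow> real"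
  assumes f': "\<And>t. (f has_real_derivative f' t) (at t)"
    and f'': "\<And>t. (f' has_real_derivative f'' t) (at t)"
    and bounds: "\<And>t. a \<le> f'' t \<and> f'' t \<le> b"
  shows "a / 2 \<le> f 1 - f 0 - f' 0 \<and> f 1 - f 0 - f' 0 \<le> b / 2"
proof -
  define diff where "diff = (\<lambda>m::nat. if m = 0 then f else if m = 1 then f' else f'')"
  have "\<forall>m t. m < 2 \<and> 0 \<le> t \<and> t \<le> 1 \<longrightarrow> (diff m has_real_derivative diff (Suc m) t) (at t)"
    using f' f'' by (auto simp: diff_def less_2_cases_iff)
  then obtain t where "f 1 = (\<Sum>m<2. diff m 0 / fact m * 1 ^ m) + diff 2 t / fact 2 * 1 ^ 2"
    using Maclaurin2[of 1 diff f 2] by (auto simp: diff_def)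
  then have "f 1 - f 0 - f' 0 = f'' t / 2"
    by (simp add: diff_def eval_nat_numeral)
  with bounds[of t] show ?thesis
    by simp
qed

lemma bregman_bounds_of_hessian_bounds:
  fixes U :: "'a::real_inner \<Rightarrow> real"
  assumes grad: "\<And>z. (U has_derivative (\<lambda>h. gU z \<bullet> h)) (at z)"
    and hess: "\<And>z. (gU has_derivative H z) (at z)"
    and hess_bounds: "\<And>z h. \<mu> * (norm h)^2 \<le> h \<bullet> H z h \<and> h \<bullet> H z h \<le> L * (norm h)^2"
  shows "\<mu> / 2 * norm v^2 \<le> U (x + v) - U x - gU x \<bullet> v \<and>
         U (x + v) - U x - gU x \<bullet> v \<le> L / 2 * norm v^2"
proof -
  have line: "((\<lambda>t. x + t *\<^sub>R v) has_derivative (\<lambda>s. s *\<^sub>R v)) (at t)" for t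
    by (auto intro!: derivative_eq_intros)
  have "((\<lambda>t. U (x + t *\<^sub>R v)) has_real_derivative gU (x + t *\<^sub>R v) \<bullet> v) (at t)" for t
    using has_derivative_compose[OF line grad]
    by (simp add: has_field_derivative_def mult_commute_abs)
  moreover have
    "((\<lambda>t. gU (x + t *\<^sub>R v) \<bullet> v) has_real_derivative v \<bullet> H (x + t *\<^sub>R v) v) (at t)" for t
  proof -
    have "linear (H (x + t *\<^sub>R v))"
      using hess by (rule has_derivative_linear)
    then have "(\<lambda>s. H (x + t *\<^sub>R v) (s *\<^sub>R v) \<bullet> v) = (*) (v \<bullet> H (x + t *\<^sub>R v) v)"
      by (simp add: fun_eq_iff linear.scaleR inner_commute)
    moreover have "((\<lambda>t. gU (x + t *\<^sub>R v) \<bullet> v) has_derivative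
        (\<lambda>s. H (x + t *\<^sub>R v) (s *\<^sub>R v) \<bullet> v)) (at t)"
      by (rule has_derivative_inner_left[OF has_derivative_compose[OF line hess]])
    ultimately show ?thesis
      by (simp add: has_field_derivative_def)
  qed
  ultimately have "\<mu> * norm v^2 / 2 \<le> U (x + 1 *\<^sub>R v) - U (x + 0 *\<^sub>R v) - gU (x + 0 *\<^sub>R v) \<bullet> v \<and>
      U (x + 1 *\<^sub>R v) - U (x + 0 *\<^sub>R v) - gU (x + 0 *\<^sub>R v) \<bullet> v \<le> L * norm v^2 / 2"
    using hess_bounds by (rule second_order_remainder_bounds)
  then show ?thesis
    by simp
qed

lemma grad_inner_eq:
  fixes f :: "'a::euclidean_space \<Rightarrow> real"
  assumes deriv: "(f has_derivative D) (at x)"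
  shows "grad f x \<bullet> h = D h"
proof -
  define g where "g = (\<Sum>b\<in>Basis. D b *\<^sub>R b)"
  have "linear D"
    using deriv by (rule has_derivative_linear)
  have "D = (\<lambda>h. g \<bullet> h)"
  proof
    fix h
    have "D h = (\<Sum>b\<in>Basis. (h \<bullet> b) * D b)"
      using Linear_Algebra.linear_componentwise[OF \<open>linear D\<close>, of h 1]
      by (simp only: inner_real_def mult_1_right)
    also have "\<dots> = g \<bullet> h"
      unfolding g_def inner_sum_left by (intro sum.cong refl) (simp add: inner_commute)
    finally show "D h = g \<bullet> h" .
  qed
  with deriv have "\<exists>g. (f has_derivative (\<lambda>h. g \<bullet> h)) (at x)"
    by blast
  then have "(f has_derivative (\<lambda>h. grad f x \<bullet> h)) (at x)"
    unfolding grad_def by (rule someI_ex)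
  then show ?thesis
    using has_derivative_unique[OF _ deriv] by metis
qed

lemma inner_grad_diff_eq_bregman_add:
  "(grad f x - grad f y) \<bullet> (x - y) = bregman f x y + bregman f y x"
  by (simp add: bregman_def inner_diff_left inner_diff_right)

section \<open>The energy of the Gaussian family\<close>

definition reparam :: "(real^'n::finite) \<times> (real^'n^'n) \<Rightarrow> real^'n \<Rightarrow> real^'n" where
  "reparam lam z = fst lam + snd lam *v z"

lemma reparam_add: "reparam (lam + h) z = reparam lam z + reparam h z"
  unfolding reparam_def by (simp add: matrix_vector_mult_add_rdistrib)

lemma reparam_scaleR: "reparam (c *\<^sub>R h) z = c *\<^sub>R reparam h z"
  unfolding reparam_def by (simp add: scaleR_matrix_vector_assoc scaleR_add_right)

lemma continuous_on_reparam: "continuous_on UNIV (reparam lam)"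
  unfolding reparam_def
  by (intro continuous_on_add continuous_on_const linear_continuous_on
      matrix_vector_mul_bounded_linear)

lemma borel_measurable_continuous_std_gauss:
  fixes f :: "real^'n::finite \<Rightarrow> 'b::topological_space"
  assumes "continuous_on UNIV f"
  shows "f \<in> borel_measurable std_gauss"
  using borel_measurable_continuous_onI[OF assms] measurable_cong_sets[OF sets_std_gauss refl]
  by blast

lemma has_bochner_integral_norm_reparam_sq:
  "has_bochner_integral std_gauss (\<lambda>z. norm (reparam h z)^2) (norm h^2)"
  using has_bochner_integral_std_gauss_norm_affine_sq[of "fst h" "snd h"]
  unfolding reparam_def by (simp add: norm_prod_def)

lemma energy_q_param:
  assumes "U \<in> borel_measurable borel"
  shows "energy U (q_param lam) = (\<integral>z. U (reparam lam z) \<partial>std_gauss)"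
proof -
  have "q_param lam = distr std_gauss borel (reparam lam)"
    unfolding q_param_def reparam_def ..
  then show ?thesis
    unfolding energy_def
    by (simp add: integral_distr[OF borel_measurable_continuous_std_gauss[OF continuous_on_reparam]
          assms])
qed

lemma integrable_reparam_quadratic_growth:
  fixes f :: "real^'n::finite \<Rightarrow> real"
  assumes cont: "continuous_on UNIV f" and growth: "\<And>x. \<bar>f x\<bar> \<le> a + b * norm x^2"
  shows "integrable std_gauss (\<lambda>z. f (reparam lam z))"
proof (rule Bochner_Integration.integrable_bound)
  show "integrable std_gauss (\<lambda>z. a + b * norm (reparam lam z)^2)"
    by (intro Bochner_Integration.integrable_add integrable_mult_right
        integrable.intros[OF has_bochner_integral_std_gauss_const]
        integrable.intros[OF has_bochner_integral_norm_reparam_sq])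
  show "(\<lambda>z. f (reparam lam z)) \<in> borel_measurable std_gauss"
    by (intro borel_measurable_continuous_std_gauss
        continuous_on_compose2[OF cont continuous_on_reparam]) auto
  show "AE z in std_gauss. norm (f (reparam lam z)) \<le> norm (a + b * norm (reparam lam z)^2)"
    using growth by (auto intro: order_trans[OF _ abs_ge_self])
qed

definition energy_deriv ::
  "(real^'n::finite \<Rightarrow> real^'n) \<Rightarrow> (real^'n) \<times> (real^'n^'n) \<Rightarrow> (real^'n) \<times> (real^'n^'n) \<Rightarrow> real"
where
  "energy_deriv gU lam h = (\<integral>z. gU (reparam lam z) \<bullet> reparam h z \<partial>std_gauss)"

locale smooth_strongly_convex =
  fixes U :: "real^'n::finite \<Rightarrow> real" and gU :: "real^'n \<Rightarrow> real^'n" and \<mu> L :: real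
  assumes continuous_U: "continuous_on UNIV U"
    and continuous_gU: "continuous_on UNIV gU"
    and mu_nonneg: "0 \<le> \<mu>"
    and bregman_bounds: "\<And>x v. \<mu> / 2 * norm v^2 \<le> U (x + v) - U x - gU x \<bullet> v \<and>
                                U (x + v) - U x - gU x \<bullet> v \<le> L / 2 * norm v^2"
begin

definition taylor_remainder :: "real^'n \<Rightarrow> real^'n \<Rightarrow> real" where
  "taylor_remainder x v = U (x + v) - U x - gU x \<bullet> v"

lemma taylor_remainder_bounds: "0 \<le> taylor_remainder x v \<and> taylor_remainder x v \<le> L / 2 * norm v^2"
proof -
  have "0 \<le> \<mu> / 2 * norm v^2"
    using mu_nonneg by simp
  then show ?thesis
    using bregman_bounds[where x = x and v = v] unfolding taylor_remainder_def by linarith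
qed

lemma abs_U_le_quadratic: "\<bar>U x\<bar> \<le> (\<bar>U 0\<bar> + norm (gU 0)) + (norm (gU 0) + L / 2) * norm x^2"
proof -
  have "0 \<le> U x - U 0 - gU 0 \<bullet> x \<and> U x - U 0 - gU 0 \<bullet> x \<le> L / 2 * norm x^2"
    using taylor_remainder_bounds[of 0 x] by (simp add: taylor_remainder_def)
  moreover have "\<bar>gU 0 \<bullet> x\<bar> \<le> norm (gU 0) * (1 + norm x^2)"
  proof -
    have "norm x \<le> 1 + norm x^2"
      by (smt (verit, best) self_le_power zero_le_power2 pos2)
    then show ?thesis
      using Cauchy_Schwarz_ineq2[of "gU 0" x] by (meson mult_left_mono norm_ge_zero order_trans)
  qed
  ultimately have "\<bar>U x\<bar> \<le> \<bar>U 0\<bar> + norm (gU 0) * (1 + norm x^2) + L / 2 * norm x^2"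
    by arith
  then show ?thesis
    by (simp add: algebra_simps)
qed

lemma integrable_U_reparam: "integrable std_gauss (\<lambda>z. U (reparam lam z))"
  by (rule integrable_reparam_quadratic_growth[OF continuous_U abs_U_le_quadratic])

lemma integrable_taylor_remainder_reparam:
  "integrable std_gauss (\<lambda>z. taylor_remainder (reparam lam z) (reparam h z))"
proof (rule Bochner_Integration.integrable_bound)
  show "integrable std_gauss (\<lambda>z. L / 2 * norm (reparam h z)^2)"
    by (intro integrable_mult_right integrable.intros[OF has_bochner_integral_norm_reparam_sq])
  have "continuous_on UNIV (\<lambda>z. taylor_remainder (reparam lam z) (reparam h z))"
    unfolding taylor_remainder_def
    by (intro continuous_intros continuous_on_compose2[OF continuous_U]
        continuous_on_compose2[OF continuous_gU] continuous_on_reparam) auto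
  then show "(\<lambda>z. taylor_remainder (reparam lam z) (reparam h z)) \<in> borel_measurable std_gauss"
    by (rule borel_measurable_continuous_std_gauss)
  show "AE z in std_gauss.
      norm (taylor_remainder (reparam lam z) (reparam h z)) \<le> norm (L / 2 * norm (reparam h z)^2)"
  proof (rule AE_I2)
    fix z
    show "norm (taylor_remainder (reparam lam z) (reparam h z))
        \<le> norm (L / 2 * norm (reparam h z)^2)"
      using taylor_remainder_bounds[of "reparam lam z" "reparam h z"] by auto
  qed
qed

text \<open>No growth bound on the gradient is needed: the integrand below is a difference of
  integrable functions.\<close>
lemma integrable_grad_inner_reparam:
  "integrable std_gauss (\<lambda>z. gU (reparam lam z) \<bullet> reparam h z)"
proof -
  have "integrable std_gauss (\<lambda>z. U (reparam (lam + h) z) - U (reparam lam z) -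
      taylor_remainder (reparam lam z) (reparam h z))"
    by (intro Bochner_Integration.integrable_diff integrable_U_reparam
        integrable_taylor_remainder_reparam)
  then show ?thesis
    by (simp add: taylor_remainder_def reparam_add)
qed

lemma linear_energy_deriv: "linear (energy_deriv gU lam)"
proof (rule linearI)
  fix h k :: "(real^'n) \<times> (real^'n^'n)" and c :: real
  show "energy_deriv gU lam (h + k) = energy_deriv gU lam h + energy_deriv gU lam k"
    unfolding energy_deriv_def reparam_add inner_add_right
    by (intro Bochner_Integration.integral_add integrable_grad_inner_reparam)
  show "energy_deriv gU lam (c *\<^sub>R h) = c *\<^sub>R energy_deriv gU lam h"
    unfolding energy_deriv_def reparam_scaleR inner_scaleR_right by simp
qed

lemma energy_remainder_bounds:
  "\<mu> / 2 * norm h^2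
     \<le> energy U (q_param (lam + h)) - energy U (q_param lam) - energy_deriv gU lam h \<and>
   energy U (q_param (lam + h)) - energy U (q_param lam) - energy_deriv gU lam h
     \<le> L / 2 * norm h^2"
proof -
  define R where "R z = taylor_remainder (reparam lam z) (reparam h z)" for z
  have R_integrable: "integrable std_gauss R"
    unfolding R_def by (rule integrable_taylor_remainder_reparam)
  have sq_integrable: "integrable std_gauss (\<lambda>z. c * norm (reparam h z)^2)" for c
    by (intro integrable_mult_right integrable.intros[OF has_bochner_integral_norm_reparam_sq])
  have U_borel: "U \<in> borel_measurable borel"
    using continuous_U by (rule borel_measurable_continuous_onI)
  have "energy U (q_param (lam + h)) - energy U (q_param lam) - energy_deriv gU lam h
      = integral\<^sup>L std_gauss R"
    unfolding energy_q_param[OF U_borel] energy_deriv_def R_def taylor_remainder_def reparam_add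
    by (simp add: integrable_U_reparam integrable_grad_inner_reparam
        flip: reparam_add Bochner_Integration.integral_diff)
  moreover have "(\<integral>z. norm (reparam h z)^2 \<partial>std_gauss) = norm h^2"
    using has_bochner_integral_norm_reparam_sq by (rule has_bochner_integral_integral_eq)
  moreover have "(\<integral>z. \<mu> / 2 * norm (reparam h z)^2 \<partial>std_gauss) \<le> integral\<^sup>L std_gauss R"
    using bregman_bounds
    by (intro integral_mono sq_integrable R_integrable) (simp add: R_def taylor_remainder_def)
  moreover have "integral\<^sup>L std_gauss R \<le> (\<integral>z. L / 2 * norm (reparam h z)^2 \<partial>std_gauss)"
    using bregman_bounds
    by (intro integral_mono sq_integrable R_integrable) (simp add: R_def taylor_remainder_def)
  ultimately show ?thesis
    by simp
qed

lemma energy_has_derivative: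
  "((\<lambda>l. energy U (q_param l)) has_derivative energy_deriv gU lam) (at lam)"
  unfolding has_derivative_iff_norm
proof
  show "bounded_linear (energy_deriv gU lam)"
    using linear_energy_deriv by (rule linear_conv_bounded_linear[THEN iffD1])
  have bound:
    "norm (norm (energy U (q_param y) - energy U (q_param lam) - energy_deriv gU lam (y - lam))
      / norm (y - lam)) \<le> L / 2 * norm (y - lam)" for y
  proof -
    have "0 \<le> \<mu> / 2 * norm (y - lam)^2"
      using mu_nonneg by simp
    then have "norm (energy U (q_param y) - energy U (q_param lam) - energy_deriv gU lam (y - lam))
        \<le> L / 2 * norm (y - lam) * norm (y - lam)"
      using energy_remainder_bounds[where lam = lam and h = "y - lam"]
      by (auto simp: power2_eq_square)
    then show ?thesis
      by (cases "y = lam") (simp_all add: divide_le_eq)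
  qed
  have "((\<lambda>y. L / 2 * norm (y - lam)) \<longlongrightarrow> L / 2 * norm (lam - lam)) (at lam)"
    by (intro tendsto_intros)
  then have "((\<lambda>y. L / 2 * norm (y - lam)) \<longlongrightarrow> 0) (at lam)"
    by simp
  then show "((\<lambda>y.
      norm (energy U (q_param y) - energy U (q_param lam) - energy_deriv gU lam (y - lam))
      / norm (y - lam)) \<longlongrightarrow> 0) (at lam)"
    by (rule Lim_null_comparison[OF always_eventually[OF allI[OF bound]]])
qed

lemma energy_bregman_lower_bound:
  "\<mu> / 2 * norm (x - y)^2 \<le> bregman (\<lambda>l. energy U (q_param l)) x y"
  using energy_remainder_bounds[where lam = y and h = "x - y"]
  unfolding bregman_def grad_inner_eq[OF energy_has_derivative] by simp

end

theorem lemma3p9: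
  fixes U :: "real^('n::{finite,wellorder}) \<Rightarrow> real"
    and gU :: "real^('n::{finite,wellorder}) \<Rightarrow> real^('n::{finite,wellorder})"
    and HU :: "real^('n::{finite,wellorder}) \<Rightarrow> real^('n::{finite,wellorder})^('n::{finite,wellorder})"
    and \<mu> L :: real
    and lam lam_star :: "(real^('n::{finite,wellorder})) \<times> (real^('n::{finite,wellorder})^('n::{finite,wellorder}))"
  assumes mu_pos: "\<mu> > 0" and L_nonneg: "L \<ge> 0"
    and grad_U: "\<And>z. (U has_derivative (\<lambda>h. gU z \<bullet> h)) (at z)"
    and hess_U: "\<And>z. (gU has_derivative (\<lambda>h. HU z *v h)) (at z)"
    and hess_bounds: "\<And>z h. \<mu> * (norm h)^2 \<le> h \<bullet> (HU z *v h) \<and> h \<bullet> (HU z *v h) \<le> L * (norm h)^2"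
    and lam_in: "lam \<in> Lambda_set"
    and star_in: "lam_star \<in> Lambda_set"
    and star_min: "\<And>l. l \<in> Lambda_set \<Longrightarrow>
                     free_energy U (q_param lam_star) \<le> free_energy U (q_param l)"
  shows "(grad (\<lambda>l. energy U (q_param l)) lam - grad (\<lambda>l. energy U (q_param l)) lam_star) \<bullet> (lam - lam_star)
         \<ge> \<mu> / 2 * (norm (lam - lam_star))^2 + bregman (\<lambda>l. energy U (q_param l)) lam lam_star"
proof -
  interpret smooth_strongly_convex U gU \<mu> L
  proof
    show "continuous_on UNIV U"
      by (intro continuous_at_imp_continuous_on ballI has_derivative_continuous[OF grad_U])
    show "continuous_on UNIV gU"
      by (intro continuous_at_imp_continuous_on ballI has_derivative_continuous[OF hess_U])
  qed (use mu_pos bregman_bounds_of_hessian_bounds[OF grad_U hess_U hess_bounds] in auto)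
  have "\<mu> / 2 * norm (lam - lam_star)^2 \<le> bregman (\<lambda>l. energy U (q_param l)) lam_star lam"
    using energy_bregman_lower_bound[of lam_star lam] by (simp add: norm_minus_commute)
  then show ?thesis
    unfolding inner_grad_diff_eq_bregman_add by simp
qed

end
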